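(* Let $n=2^s$, $q=2^r$ ($s,r$ positive integers). The dual code $C^{\perp}(SL(n,q))$ of the binary code $C(SL(n,q))$ is \[ C^{\perp}(SL(n,q))=\{c(a)=(tr(a\,Tr(g_1)),tr(a\,Tr(g_2)),\dots,tr(a\,Tr(g_N))) : a\in\mathbb{F}_q\}. \]
   Context: $\mathbb{F}_q$ is the field with $q$ elements and $tr:\mathbb{F}_q\to\mathbb{F}_2$ the absolute trace. $N=|SL(n,q)|$, $g_1,\dots,g_N$ is a fixed ordering of $SL(n,q)$, $Tr$ is the matrix trace, $v=(Tr(g_1),\dots,Tr(g_N))\in\mathbb{F}_q^N$, and $C(SL(n,q))=\{u\in\mathbb{F}_2^N: u\cdot v=0\}$ (dot product in $\mathbb{F}_q$); the dual is taken in $\mathbb{F}_2^N$ with respect to the standard inner product. *)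

theory Defs
  imports "HOL-Analysis.Analysis" "HOL-Library.Z2"
begin

definition bit_emb :: "bit \<Rightarrow> 'a::field" where
  "bit_emb b = (if b = 1 then 1 else 0)"

definition abs_tr :: "nat \<Rightarrow> 'a::field \<Rightarrow> bit" where
  "abs_tr r x = (THE b. bit_emb b = (\<Sum>i<r. x ^ (2 ^ i)))"

definition SL :: "('a::field ^'n::finite^'n) set" where
  "SL = {A. det A = 1}"

text \<open>Binary words indexed by the elements of SL(n,q) (i.e. F_2^N): functions vanishing off SL.\<close>
definition words :: "(('a::field ^'n::finite^'n) \<Rightarrow> bit) set" where
  "words = {u. \<forall>g. g \<notin> SL \<longrightarrow> u g = 0}"

text \<open>C(SL(n,q)) = {u in F_2^N : u . v = 0}, dot product computed in F_q, v = (Tr g)_g.\<close>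
definition code_SL :: "(('a::field ^'n::finite^'n) \<Rightarrow> bit) set" where
  "code_SL = {u \<in> words. (\<Sum>g\<in>SL. bit_emb (u g) * trace g) = (0::'a)}"

definition dual_code :: "(('a::field ^'n::finite^'n) \<Rightarrow> bit) set \<Rightarrow> (('a ^'n^'n) \<Rightarrow> bit) set" where
  "dual_code C = {w \<in> words. \<forall>u\<in>C. (\<Sum>g\<in>SL. u g * w g) = 0}"

definition trace_word :: "nat \<Rightarrow> 'a::field \<Rightarrow> (('a ^'n::finite^'n) \<Rightarrow> bit)" where
  "trace_word r a = (\<lambda>g. if g \<in> SL then abs_tr r (a * trace g) else 0)"

end

theory Submission
  imports Defs "HOL-Number_Theory.Residues" "HOL-Computational_Algebra.Polynomial"
begin

text \<open>A word \<open>w\<close> of the dual code is orthogonal to the indicator of every set \<open>D \<subseteq> SL(n,q)\<close>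
  whose traces sum to \<open>0\<close>. Applied to sets of at most three matrices, and since the trace maps
  \<open>SL(n,q)\<close> onto \<open>\<bbbF>\<^sub>q\<close> for \<open>n \<ge> 2\<close>, this shows \<open>w = f \<circ> Tr\<close> for an additive
  \<open>f : \<bbbF>\<^sub>q \<rightarrow> \<bbbF>\<^sub>2\<close>. The \<open>q\<close> maps \<open>t \<mapsto> tr(a t)\<close> are additive and pairwise distinct, and there
  are at most \<open>q\<close> additive maps \<open>\<bbbF>\<^sub>q \<rightarrow> \<bbbF>\<^sub>2\<close>, because their real characters \<open>(-1)\<^sup>f\<close> are
  pairwise orthogonal in \<open>\<real>\<^sup>q\<close>; hence \<open>f = tr(a \<cdot>)\<close>. Conversely \<open>c(a)\<close> lies in the dual code
  because \<open>tr\<close> is additive.\<close>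

section \<open>Fields of characteristic two\<close>

lemma add_self_CHAR_2:
  assumes "CHAR('a::ring_1) = 2"
  shows "(x::'a) + x = 0"
  using uminus_CHAR_2[OF assms, of x] add.right_inverse[of x] by simp

text \<open>The library's \<open>finite_field_power_card_eq_same\<close> is stated for the class \<open>finite_field\<close>,
  which a type variable of sort \<open>{field, finite}\<close> cannot be shown to belong to.\<close>

lemma power_card_eq_self:
  fixes x :: "'a::{field,finite}"
  shows "x ^ CARD('a) = x"
proof (cases "x = 0")
  case True
  then show ?thesis by (simp add: zero_power)
next
  case False
  let ?U = "UNIV - {0} :: 'a set"
  have "x ^ card ?U * (\<Prod>y\<in>?U. y) = (\<Prod>y\<in>?U. x * y)"
    by (simp only: prod.distrib prod_constant)
  also have "\<dots> = (\<Prod>y\<in>?U. y)"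
    using False by (intro prod.reindex_bij_witness[of _ "\<lambda>y. y / x" "\<lambda>y. x * y"]) auto
  finally have "x ^ card ?U = 1"
    by (metis mult_cancel_right2 prod_zero_iff finite DiffD2 singletonI)
  moreover have "CARD('a) = Suc (card ?U)"
    using card_Suc_Diff1[of UNIV 0] by simp
  ultimately show ?thesis by (metis power_Suc mult_1_right)
qed

lemma CHAR_eq_2_if_card_power_2:
  assumes "CARD('a::{field,finite}) = 2 ^ r"
  shows "CHAR('a) = 2"
proof -
  have "prime CHAR('a)" by (rule prime_CHAR_semidom) (simp add: finite_imp_CHAR_pos)
  moreover have "CHAR('a) dvd 2 ^ r" using CHAR_dvd_CARD[where 'a='a] assms by simp
  ultimately show ?thesis
    using prime_dvd_power primes_dvd_imp_eq two_is_prime_nat by blast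
qed

section \<open>The absolute trace\<close>

text \<open>\<open>Z2\<close> makes the simplifier rewrite \<open>+\<close> and \<open>*\<close> on \<open>bit\<close> into \<open>XOR\<close> and \<open>AND\<close>;
  the ring-theoretic reasoning below needs them kept as they are.\<close>

declare add_bit_eq_xor [simp del] mult_bit_eq_and [simp del]

lemma bit_add_eq_0_iff: "(a::bit) + b = 0 \<longleftrightarrow> a = b"
  by (cases a; cases b) simp_all

lemma bit_emb_eq_iff [simp]: "bit_emb x = (bit_emb y :: 'a::field) \<longleftrightarrow> x = y"
  by (cases x; cases y) (simp_all add: bit_emb_def)

lemma bit_emb_simps [simp]: "bit_emb 0 = 0" "bit_emb 1 = 1"
  by (simp_all add: bit_emb_def)

lemma bit_emb_eq_0_iff [simp]: "bit_emb x = (0::'a::field) \<longleftrightarrow> x = 0"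
  by (cases x) simp_all

lemma bit_emb_add:
  assumes "CHAR('a::field) = 2"
  shows "bit_emb (x + y) = (bit_emb x + bit_emb y :: 'a)"
  by (cases x; cases y) (simp_all add: add_self_CHAR_2[OF assms])

lemma bit_emb_mult: "bit_emb (x * y) = (bit_emb x * bit_emb y :: 'a::field)"
  by (cases x; cases y) simp_all

lemma bit_emb_sum:
  assumes "CHAR('a::field) = 2"
  shows "bit_emb (\<Sum>i\<in>A. f i) = (\<Sum>i\<in>A. bit_emb (f i) :: 'a)"
  by (induction A rule: infinite_finite_induct) (simp_all add: bit_emb_add[OF assms])

definition field_trace :: "nat \<Rightarrow> 'a::field \<Rightarrow> 'a" where
  "field_trace r x = (\<Sum>i<r. x ^ 2 ^ i)"

lemma field_trace_0 [simp]: "field_trace r 0 = 0"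
  by (simp add: field_trace_def power_0_left)

lemma field_trace_add:
  assumes "CHAR('a::field) = 2"
  shows "field_trace r (x + y :: 'a) = field_trace r x + field_trace r y"
proof -
  have "(x + y) ^ 2 ^ i = x ^ 2 ^ i + y ^ 2 ^ i" for i
    by (rule freshmans_dream'[where n = i]) (simp_all add: assms)
  then show ?thesis by (simp add: field_trace_def sum.distrib)
qed

lemma field_trace_sum:
  assumes "CHAR('a::field) = 2"
  shows "field_trace r (\<Sum>i\<in>A. f i) = (\<Sum>i\<in>A. field_trace r (f i :: 'a))"
  by (induction A rule: infinite_finite_induct) (simp_all add: field_trace_add[OF assms])

lemma field_trace_square:
  assumes "CARD('a::{field,finite}) = 2 ^ r"
  shows "field_trace r (x::'a) ^ 2 = field_trace r x"
proof -
  have char: "CHAR('a) = 2" using assms by (rule CHAR_eq_2_if_card_power_2)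
  have "field_trace r x ^ 2 = (\<Sum>i<r. (x ^ 2 ^ i) ^ 2)"
    unfolding field_trace_def by (rule freshmans_dream_sum) (simp_all add: char)
  also have "\<dots> = (\<Sum>i<r. x ^ 2 ^ Suc i)"
    by (simp add: power_mult[symmetric] mult.commute)
  finally have "field_trace r x ^ 2 + x = (\<Sum>i<Suc r. x ^ 2 ^ i)"
    by (subst sum.lessThan_Suc_shift) (simp add: add.commute)
  also have "\<dots> = field_trace r x + x"
    using power_card_eq_self[of x] by (simp add: field_trace_def assms)
  finally show ?thesis by simp
qed

lemma field_trace_cases:
  assumes "CARD('a::{field,finite}) = 2 ^ r"
  shows "field_trace r (x::'a) = 0 \<or> field_trace r x = 1"
proof -
  have "field_trace r x * (field_trace r x - 1) = 0"
    using field_trace_square[OF assms, of x] by (simp add: algebra_simps power2_eq_square)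
  then show ?thesis by simp
qed

lemma bit_emb_abs_tr:
  assumes "CARD('a::{field,finite}) = 2 ^ r"
  shows "bit_emb (abs_tr r x) = field_trace r (x::'a)"
proof -
  have "\<exists>!b. bit_emb b = field_trace r x"
    using field_trace_cases[OF assms, of x] by (metis bit_emb_eq_iff bit_emb_simps)
  then show ?thesis
    unfolding abs_tr_def field_trace_def[symmetric] by (rule theI')
qed

lemma abs_tr_add:
  assumes "CARD('a::{field,finite}) = 2 ^ r"
  shows "abs_tr r (x + y :: 'a) = abs_tr r x + abs_tr r y"
proof -
  have char: "CHAR('a) = 2" using assms by (rule CHAR_eq_2_if_card_power_2)
  have "bit_emb (abs_tr r (x + y)) = (bit_emb (abs_tr r x + abs_tr r y) :: 'a)"
    by (simp add: bit_emb_add[OF char] bit_emb_abs_tr[OF assms] field_trace_add[OF char])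
  then show ?thesis by simp
qed

lemma card_field_ge_2: "CARD('a::{field,finite}) \<ge> 2"
proof -
  have "card {0, 1 :: 'a} \<le> CARD('a)" by (rule card_mono) simp_all
  then show ?thesis by simp
qed

lemma field_trace_not_identically_zero:
  assumes "CARD('a::{field,finite}) = 2 ^ r"
  shows "\<exists>x::'a. field_trace r x \<noteq> 0"
proof (rule ccontr)
  assume trace_zero: "\<not> ?thesis"
  have "r > 0"
    using card_field_ge_2[where 'a='a] assms by (cases r) simp_all
  define p :: "'a poly" where "p = (\<Sum>i<r. Polynomial.monom 1 (2 ^ i))"
  have "Polynomial.coeff p (2 ^ (r - 1)) = (\<Sum>i<r. if i = r - 1 then 1 else 0)"
    unfolding p_def Polynomial.coeff_sum by (intro sum.cong) simp_all
  also have "\<dots> = 1" using \<open>r > 0\<close> by simp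
  finally have "p \<noteq> 0" by auto
  have "degree p \<le> 2 ^ (r - 1)"
    unfolding p_def
  proof (rule degree_sum_le)
    fix i assume "i \<in> {..<r}"
    then have "(2::nat) ^ i \<le> 2 ^ (r - 1)" by (intro power_increasing) auto
    then show "degree (Polynomial.monom (1::'a) (2 ^ i)) \<le> 2 ^ (r - 1)"
      using degree_monom_le order.trans by blast
  qed simp
  moreover have "CARD('a) \<le> degree p"
  proof -
    have "poly p x = field_trace r x" for x
      by (simp add: p_def poly_sum poly_monom field_trace_def)
    then have "{x. poly p x = 0} = UNIV" using trace_zero by simp
    then show ?thesis using card_poly_roots_bound[OF \<open>p \<noteq> 0\<close>] by simp
  qed
  moreover have "(2::nat) ^ (r - 1) < 2 ^ r" using \<open>r > 0\<close> by simp
  ultimately show False using assms by linarith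
qed

section \<open>Additive maps to \<open>\<bbbF>\<^sub>2\<close>\<close>

definition additive_bit_maps :: "('b::plus \<Rightarrow> bit) set" where
  "additive_bit_maps = {f. \<forall>x y. f (x + y) = f x + f y}"

definition sign_character :: "('b::finite \<Rightarrow> bit) \<Rightarrow> real^'b" where
  "sign_character f = (\<chi> t. if f t = 0 then 1 else -1)"

lemma sum_sign_character_eq_0:
  fixes f :: "'b::{group_add,finite} \<Rightarrow> bit"
  assumes "f \<in> additive_bit_maps" and "f \<noteq> (\<lambda>_. 0)"
  shows "(\<Sum>t\<in>UNIV. sign_character f $ t) = 0"
proof -
  obtain x where "f x = 1" using assms(2) by (auto simp: fun_eq_iff)
  let ?S = "\<Sum>t\<in>UNIV. sign_character f $ t"
  have "?S = (\<Sum>t\<in>UNIV. sign_character f $ (t + x))"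
    by (rule sum.reindex_bij_witness[of _ "\<lambda>t. t + x" "\<lambda>t. t - x"]) auto
  also have "\<dots> = - ?S"
  proof -
    have "sign_character f $ (t + x) = - sign_character f $ t" for t
      using assms(1) \<open>f x = 1\<close>
      by (cases "f t") (simp_all add: sign_character_def additive_bit_maps_def)
    then show ?thesis by (simp add: sum_negf)
  qed
  finally show ?thesis by simp
qed

lemma inner_sign_character:
  "sign_character f \<bullet> sign_character g = (\<Sum>t\<in>UNIV. sign_character (\<lambda>t. f t + g t) $ t)"
  unfolding inner_vec_def
proof (intro sum.cong refl)
  fix t
  show "sign_character f $ t \<bullet> sign_character g $ t = sign_character (\<lambda>t. f t + g t) $ t"
    by (cases "f t"; cases "g t") (simp_all add: sign_character_def)
qed

lemma card_additive_bit_maps_le: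
  shows "finite (additive_bit_maps :: ('b::{group_add,finite} \<Rightarrow> bit) set)"
    and "card (additive_bit_maps :: ('b \<Rightarrow> bit) set) \<le> CARD('b)"
proof -
  let ?A = "additive_bit_maps :: ('b \<Rightarrow> bit) set"
  have inj: "inj_on sign_character ?A"
  proof (rule inj_onI)
    fix f g :: "'b \<Rightarrow> bit" assume "sign_character f = sign_character g"
    then have "f t = g t" for t
      by (cases "f t"; cases "g t") (auto simp: sign_character_def vec_eq_iff dest: spec[of _ t])
    then show "f = g" by auto
  qed
  have "pairwise orthogonal (sign_character ` ?A)"
  proof (rule pairwiseI)
    fix u v assume "u \<in> sign_character ` ?A" "v \<in> sign_character ` ?A" "u \<noteq> v"
    then obtain f g where fg: "f \<in> ?A" "g \<in> ?A" and uv: "u = sign_character f" "v = sign_character g"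
      and "f \<noteq> g" by blast
    then obtain t where "f t \<noteq> g t" by (metis ext)
    then have "f t + g t \<noteq> 0" by (cases "f t"; cases "g t") simp_all
    with fg have "(\<lambda>t. f t + g t) \<in> ?A" "(\<lambda>t. f t + g t) \<noteq> (\<lambda>_. 0)"
      by (auto simp: additive_bit_maps_def ac_simps fun_eq_iff)
    then show "orthogonal u v"
      unfolding uv orthogonal_def inner_sign_character by (rule sum_sign_character_eq_0)
  qed
  moreover have "0 \<notin> sign_character ` ?A"
    by (simp add: image_iff sign_character_def vec_eq_iff)
  ultimately have "finite (sign_character ` ?A) \<and> card (sign_character ` ?A) \<le> CARD('b)"
    using independent_bound pairwise_orthogonal_independent by fastforce
  then show "finite ?A" "card ?A \<le> CARD('b)"
    using inj by (simp_all add: finite_image_iff card_image)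
qed

lemma additive_bit_maps_eq_abs_tr_multiples:
  assumes "CARD('a::{field,finite}) = 2 ^ r"
  shows "(additive_bit_maps :: ('a \<Rightarrow> bit) set) = range (\<lambda>a t. abs_tr r (a * t))"
proof -
  have char: "CHAR('a) = 2" using assms by (rule CHAR_eq_2_if_card_power_2)
  let ?\<Phi> = "\<lambda>a t::'a. abs_tr r (a * t)"
  have sub: "range ?\<Phi> \<subseteq> additive_bit_maps"
    by (auto simp: additive_bit_maps_def distrib_left abs_tr_add[OF assms])
  have "inj ?\<Phi>"
  proof (rule injI)
    fix a b assume eq: "?\<Phi> a = ?\<Phi> b"
    show "a = b"
    proof (rule ccontr)
      assume "a \<noteq> b"
      obtain x :: 'a where x: "field_trace r x \<noteq> 0"
        using field_trace_not_identically_zero[OF assms] by blast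
      define t where "t = x / (a - b)"
      have "x = (a - b) * t" using \<open>a \<noteq> b\<close> by (simp add: t_def)
      also have "\<dots> = a * t + b * t" by (simp add: minus_CHAR_2[OF char] distrib_right)
      finally have "x = a * t + b * t" .
      then have "bit_emb (abs_tr r x) = (bit_emb (?\<Phi> a t + ?\<Phi> b t) :: 'a)"
        by (simp add: abs_tr_add[OF assms])
      also have "\<dots> = 0" using fun_cong[OF eq, of t] by (cases "?\<Phi> b t") simp_all
      finally show False using x by (simp add: bit_emb_abs_tr[OF assms])
    qed
  qed
  then have "card (range ?\<Phi>) = CARD('a)" by (simp add: card_image)
  moreover note card_additive_bit_maps_le[where 'b='a]
  ultimately have "card (range ?\<Phi>) = card (additive_bit_maps :: ('a \<Rightarrow> bit) set)"
    using card_mono[OF _ sub] by simp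
  then show ?thesis
    using card_subset_eq[OF card_additive_bit_maps_le(1) sub] by simp
qed

section \<open>The dual code\<close>

lemma trace_image_SL:
  assumes "CARD('n::finite) \<ge> 2"
  shows "trace ` (SL :: ('a::field^'n^'n) set) = UNIV"
proof -
  have "\<not> CARD('n) \<le> Suc 0" using assms by simp
  then obtain i j :: 'n where "i \<noteq> j" by (auto simp: card_le_Suc0_iff_eq)
  have "t \<in> trace ` (SL :: ('a^'n^'n) set)" for t
  proof -
    define c where "c = t - of_nat CARD('n)"
    define I where "I = (mat 1 :: 'a^'n^'n)"
    define U where "U = (\<chi> k. if k = i then row i I + c *s row j I else row k I)"
    define g where "g = (\<chi> k. if k = j then row j U + 1 *s row i U else row k U)"
    have "det g = det I"
      unfolding g_def U_def using \<open>i \<noteq> j\<close> by (simp add: det_row_operation)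
    then have "g \<in> SL" by (simp add: SL_def I_def)
    have "g $ k $ k = (if k = j then c else 0) + 1" for k
      using \<open>i \<noteq> j\<close> by (simp add: g_def U_def I_def row_def mat_def)
    then have "trace g = t"
      by (simp add: trace_def sum.distrib c_def)
    then show ?thesis using \<open>g \<in> SL\<close> by (auto intro: rev_image_eqI)
  qed
  then show ?thesis by blast
qed

lemma sum_if_mem_subset:
  "finite A \<Longrightarrow> D \<subseteq> A \<Longrightarrow> (\<Sum>x\<in>A. if x \<in> D then f x else 0) = sum f D"
  by (simp add: sum.inter_restrict[symmetric] Int_absorb1)

lemma dual_code_sum_eq_0:
  fixes w :: "'a::{field,finite}^'n::finite^'n \<Rightarrow> bit"
  assumes w: "w \<in> dual_code code_SL" and D: "D \<subseteq> SL" and tr: "(\<Sum>g\<in>D. trace g) = 0"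
  shows "(\<Sum>g\<in>D. w g) = 0"
proof -
  define u where "u g = (if g \<in> D then 1 else 0 :: bit)" for g :: "'a^'n^'n"
  have "(\<Sum>g\<in>SL. bit_emb (u g) * trace g) = (\<Sum>g\<in>SL. if g \<in> D then trace g else 0)"
    by (rule sum.cong) (simp_all add: u_def)
  then have "u \<in> code_SL"
    using D tr by (auto simp: code_SL_def words_def u_def sum_if_mem_subset)
  then have "(\<Sum>g\<in>SL. u g * w g) = 0" using w by (simp add: dual_code_def)
  moreover have "(\<Sum>g\<in>SL. u g * w g) = (\<Sum>g\<in>SL. if g \<in> D then w g else 0)"
    by (rule sum.cong) (simp_all add: u_def)
  ultimately show ?thesis using D by (simp add: sum_if_mem_subset)
qed

lemma dual_code_triple_sum:
  fixes w :: "'a::{field,finite}^'n::finite^'n \<Rightarrow> bit"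
  assumes char: "CHAR('a) = 2" and w: "w \<in> dual_code code_SL"
    and g: "g1 \<in> SL" "g2 \<in> SL" "g3 \<in> SL" and tr: "trace g1 + trace g2 + trace g3 = 0"
  shows "w g1 + w g2 + w g3 = 0"
proof -
  have single: "w g = 0" if "g \<in> SL" "trace g = 0" for g
    using dual_code_sum_eq_0[OF w, of "{g}"] that by simp
  note bit_add_eq_0_iff [simp]
  have [simp]: "trace g + trace g = 0" for g :: "'a^'n^'n" by (rule add_self_CHAR_2[OF char])
  consider "g1 = g2" | "g1 = g3" | "g2 = g3" | "distinct [g1, g2, g3]" by auto
  then show ?thesis
  proof cases
    case 1
    then show ?thesis using single g tr by (simp add: add.assoc)
  next
    case 2
    then show ?thesis using single g tr by (simp add: ac_simps)
  next
    case 3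
    then show ?thesis using single g tr by (simp add: add.assoc)
  next
    case 4
    then show ?thesis using dual_code_sum_eq_0[OF w, of "{g1, g2, g3}"] g tr
      by (simp add: add.assoc)
  qed
qed

lemma dual_code_factors_through_trace:
  fixes w :: "'a::{field,finite}^'n::finite^'n \<Rightarrow> bit"
  assumes char: "CHAR('a) = 2" and n: "CARD('n) \<ge> 2" and w: "w \<in> dual_code code_SL"
  obtains f where "f \<in> additive_bit_maps" and "\<And>g. g \<in> SL \<Longrightarrow> w g = f (trace g)"
proof -
  define h :: "'a \<Rightarrow> 'a^'n^'n" where "h = inv_into SL trace"
  have h: "h t \<in> SL" "trace (h t) = t" for t
  proof -
    have "t \<in> trace ` (SL :: ('a^'n^'n) set)" using trace_image_SL[where 'a='a, OF n] by simp
    then show "h t \<in> SL" "trace (h t) = t" by (simp_all add: h_def inv_into_into f_inv_into_f)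
  qed
  have h0: "w (h 0) = 0"
    using dual_code_sum_eq_0[OF w, of "{h 0}"] h by simp
  show thesis
  proof
    show "(\<lambda>t. w (h t)) \<in> additive_bit_maps"
    proof (unfold additive_bit_maps_def, intro CollectI allI)
      fix x y :: 'a
      have "w (h x) + w (h y) + w (h (x + y)) = 0"
        by (rule dual_code_triple_sum[OF char w h(1) h(1) h(1)])
           (simp add: h(2) add_self_CHAR_2[OF char] ac_simps)
      then show "w (h (x + y)) = w (h x) + w (h y)"
        by (simp add: add.assoc bit_add_eq_0_iff)
    qed
  next
    fix g :: "'a^'n^'n" assume "g \<in> SL"
    have "w g + w (h (trace g)) + w (h 0) = 0"
      by (rule dual_code_triple_sum[OF char w \<open>g \<in> SL\<close> h(1) h(1)])
         (simp add: h(2) add_self_CHAR_2[OF char])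
    then show "w g = w (h (trace g))"
      by (simp add: h0 bit_add_eq_0_iff)
  qed
qed

lemma trace_word_in_dual_code:
  assumes card: "CARD('a::{field,finite}) = 2 ^ r"
  shows "trace_word r a \<in> dual_code (code_SL :: ('a^'n::finite^'n \<Rightarrow> bit) set)"
proof -
  have char: "CHAR('a) = 2" using card by (rule CHAR_eq_2_if_card_power_2)
  have "(\<Sum>g\<in>SL. u g * trace_word r a g) = 0" if u: "u \<in> (code_SL :: ('a^'n^'n \<Rightarrow> bit) set)" for u
  proof -
    have "bit_emb (\<Sum>g\<in>SL. u g * trace_word r a g)
        = (\<Sum>g\<in>SL. field_trace r (a * (bit_emb (u g) * trace g)) :: 'a)"
      unfolding bit_emb_sum[OF char]
    proof (intro sum.cong refl)
      fix g :: "'a^'n^'n" assume "g \<in> SL"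
      then show "bit_emb (u g * trace_word r a g) = field_trace r (a * (bit_emb (u g) * trace g))"
        by (cases "u g") (simp_all add: trace_word_def bit_emb_mult bit_emb_abs_tr[OF card])
    qed
    also have "\<dots> = field_trace r (a * (\<Sum>g\<in>SL. bit_emb (u g) * trace g))"
      by (simp add: field_trace_sum[OF char] sum_distrib_left)
    also have "\<dots> = 0" using u by (simp add: code_SL_def)
    finally show ?thesis by simp
  qed
  then show ?thesis by (simp add: dual_code_def words_def trace_word_def)
qed

theorem proposition4:
  fixes s r :: nat
  assumes "s > 0" and "r > 0"
    and "CARD('n::finite) = 2 ^ s"
    and "CARD('a::{field,finite}) = 2 ^ r"
  shows "(dual_code (code_SL :: (('a ^'n^'n) \<Rightarrow> bit) set))
           = {trace_word r a | a :: 'a. True}" (is "?D = ?C")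
proof
  have char: "CHAR('a) = 2" using assms(4) by (rule CHAR_eq_2_if_card_power_2)
  have n: "CARD('n) \<ge> 2" using assms(1,3) by (simp add: self_le_power)
  show "?D \<subseteq> ?C"
  proof
    fix w assume w: "w \<in> ?D"
    then obtain f where "f \<in> additive_bit_maps" and f: "\<And>g. g \<in> SL \<Longrightarrow> w g = f (trace g)"
      using dual_code_factors_through_trace[OF char n] by blast
    then obtain a where "f = (\<lambda>t. abs_tr r (a * t))"
      using additive_bit_maps_eq_abs_tr_multiples[OF assms(4)] by blast
    moreover have "w g = 0" if "g \<notin> SL" for g
      using w that by (simp add: dual_code_def words_def)
    ultimately have "w = trace_word r a"
      using f by (auto simp: trace_word_def)
    then show "w \<in> ?C" by blast
  qed
  show "?C \<subseteq> ?D"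
    using trace_word_in_dual_code[OF assms(4)] by blast
qed

end
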